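(* Let $\epsilon\in\{1,-1\}\subseteq\mathbb{F}_{p^m}$, $\phi(x)=x^2+\epsilon\gamma x+\frac{\gamma^2}{2}$, $\mathsf{R}_{\epsilon\gamma}=R[x]/\langle\phi(x)^{p^s}\rangle$. Let $1\le i\le p^s-1$, $0\le t<i$, and let $h(x)$ be either $0$ or a unit of $\mathsf{R}_{\epsilon\gamma}$ of the form $\sum_{j}(a_{j0}x+b_{j0})\phi(x)^j$ with $a_{j0},b_{j0}\in\mathbb{F}_{p^m}$, $a_{00}x+b_{00}\neq0$. Then the smallest integer $U$ with $u\,\phi(x)^U\in\langle \phi(x)^i+u\,\phi(x)^th(x)\rangle$ is $$U=\begin{cases} i & \text{if } h(x)=0,\\ \min\{i,\ p^s-i+t\} & \text{if } h(x) \text{ is a unit in } \mathsf{R}_{\epsilon\gamma}.\end{cases}$$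
   Context: Let $p$ be an odd prime and $m,s$ positive integers with $p^m\equiv 3\pmod 4$; $\mathbb{F}_{p^m}$ is the field with $p^m$ elements and $R=\mathbb{F}_{p^m}[u]/\langle u^2\rangle$. Fix $\alpha\in\mathbb{F}_{p^m}\setminus\{0\}$ that is not a square in $\mathbb{F}_{p^m}$, let $\alpha_0\in\mathbb{F}_{p^m}$ satisfy $\alpha_0^{p^s}=\alpha$, and let $\gamma\in\mathbb{F}_{p^m}$ satisfy $\gamma^4+4\alpha_0=0$. *)

theory Defs
  imports "HOL-Computational_Algebra.Polynomial"
begin

text \<open>Model of R[x] with R = F[u]/(u^2): an element f0 + u f1 (f0, f1 in F[x]) is the pair (f0, f1).
  Since u^2 = 0, (f0 + u f1)(g0 + u g1) = f0 g0 + u (f0 g1 + f1 g0).\<close>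

type_synonym 'a Rx = "'a poly \<times> 'a poly"

definition Rx_mult :: "'a::comm_ring_1 Rx \<Rightarrow> 'a Rx \<Rightarrow> 'a Rx" where
  "Rx_mult f g = (fst f * fst g, fst f * snd g + snd f * fst g)"

text \<open>Congruence modulo the ideal generated by M (M in F[x]) inside R[x]:
  f0 + u f1 \<in> \<langle>M\<rangle> iff M divides f0 and f1.\<close>

definition Rx_cong_mod :: "'a::comm_ring_1 poly \<Rightarrow> 'a Rx \<Rightarrow> 'a Rx \<Rightarrow> bool" where
  "Rx_cong_mod M f g \<longleftrightarrow> M dvd (fst f - fst g) \<and> M dvd (snd f - snd g)"

definition quot_ideal_mem :: "'a::comm_ring_1 poly \<Rightarrow> 'a Rx \<Rightarrow> 'a Rx \<Rightarrow> bool" where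
  "quot_ideal_mem M g f \<longleftrightarrow> (\<exists>r. Rx_cong_mod M (Rx_mult r g) f)"

definition quot_unit :: "'a::comm_ring_1 poly \<Rightarrow> 'a Rx \<Rightarrow> bool" where
  "quot_unit M f \<longleftrightarrow> (\<exists>r. Rx_cong_mod M (Rx_mult r f) (1, 0))"

end

theory Submission
  imports Defs
begin

text \<open>Write \<open>N = p^s\<close>. In \<open>R[x]/\<langle>\<phi>^N\<rangle>\<close> the element \<open>u \<phi>^i = u (\<phi>^i + u \<phi>^t h)\<close> always lies in
  the ideal, and when \<open>h\<close> is a unit with inverse \<open>r\<close>, so does
  \<open>\<phi>^(N-i) r (\<phi>^i + u \<phi>^t h) = u \<phi>^(N-i+t)\<close>. Conversely, any multiple
  \<open>(r0 + u r1)(\<phi>^i + u \<phi>^t h)\<close> with vanishing \<open>u\<close>-free part forces \<open>\<phi>^(N-i) | r0\<close>, so its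
  \<open>u\<close>-part \<open>r0 \<phi>^t h + r1 \<phi>^i\<close> is divisible by \<open>\<phi>^min(i, N-i+t)\<close> (by \<open>\<phi>^i\<close> if \<open>h = 0\<close>) modulo
  \<open>\<phi>^N\<close>; since \<open>\<phi>\<close> is not a unit, \<open>\<phi>^U\<close> is not divisible by \<open>\<phi>^(U+1)\<close>.\<close>

lemma not_pow_Suc_dvd_pow:
  fixes \<phi> :: "'a::field poly"
  assumes "degree \<phi> > 0"
  shows "\<not> \<phi> ^ Suc n dvd \<phi> ^ n"
proof
  assume "\<phi> ^ Suc n dvd \<phi> ^ n"
  then have "\<phi> ^ n * \<phi> dvd \<phi> ^ n * 1" by (simp add: mult.commute)
  moreover have "\<phi> \<noteq> 0" using assms by auto
  ultimately have "is_unit \<phi>" by simp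
  with assms \<open>\<phi> \<noteq> 0\<close> show False by (simp add: is_unit_iff_degree)
qed

lemma quot_ideal_mem_fst_u:
  "quot_ideal_mem M (f, g) (0, f)"
  unfolding quot_ideal_mem_def Rx_cong_mod_def Rx_mult_def
  by (rule exI[of _ "(0, 1)"]) simp

lemma quot_ideal_mem_pow_unit:
  fixes \<phi> h :: "'a::comm_ring_1 poly"
  assumes "quot_unit (\<phi> ^ N) (h, 0)" and "i \<le> N"
  shows "quot_ideal_mem (\<phi> ^ N) (\<phi> ^ i, \<phi> ^ t * h) (0, \<phi> ^ (N - i + t))"
proof -
  obtain r where r: "\<phi> ^ N dvd r * h - 1"
    using assms(1) unfolding quot_unit_def Rx_cong_mod_def Rx_mult_def by auto
  have pow_N: "\<phi> ^ (N - i) * \<phi> ^ i = \<phi> ^ N"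
    using assms(2) by (simp flip: power_add)
  have "\<phi> ^ N dvd \<phi> ^ (N - i + t) * (r * h - 1)"
    using r by simp
  moreover have "\<phi> ^ (N - i + t) * (r * h - 1) = \<phi> ^ (N - i) * r * (\<phi> ^ t * h) - \<phi> ^ (N - i + t)"
    by (simp add: power_add algebra_simps)
  moreover have "\<phi> ^ (N - i) * r * \<phi> ^ i = \<phi> ^ N * r"
    using pow_N by (simp add: algebra_simps)
  ultimately show ?thesis
    unfolding quot_ideal_mem_def Rx_cong_mod_def Rx_mult_def
    by (intro exI[of _ "(\<phi> ^ (N - i) * r, 0)"]) simp
qed

text \<open>The \<open>u\<close>-free part of the multiplier must be divisible by \<open>\<phi>^(N-i)\<close>, so \<open>g\<close> only enters
  through \<open>\<phi>^(N-i) g\<close>.\<close>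

lemma quot_ideal_mem_pow_dvd:
  fixes \<phi> g f :: "'a::idom poly"
  assumes mem: "quot_ideal_mem (\<phi> ^ N) (\<phi> ^ i, g) (0, f)"
    and "\<phi> \<noteq> 0" and "i \<le> N" and "k \<le> i"
    and dvd_g: "\<phi> ^ k dvd \<phi> ^ (N - i) * g"
  shows "\<phi> ^ k dvd f"
proof -
  obtain r0 r1 where r0: "\<phi> ^ N dvd r0 * \<phi> ^ i"
    and diff: "\<phi> ^ N dvd r0 * g + r1 * \<phi> ^ i - f"
    using mem unfolding quot_ideal_mem_def Rx_cong_mod_def Rx_mult_def by auto
  have "\<phi> ^ (N - i) * \<phi> ^ i dvd r0 * \<phi> ^ i"
    using r0 \<open>i \<le> N\<close> by (simp flip: power_add)
  then obtain q where q: "r0 = \<phi> ^ (N - i) * q"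
    using \<open>\<phi> \<noteq> 0\<close> by (auto simp: dvd_def)
  have "\<phi> ^ k dvd r0 * g"
    using dvd_g unfolding q by (metis dvd_mult2 mult.commute mult.left_commute)
  moreover have "\<phi> ^ k dvd r1 * \<phi> ^ i"
    using \<open>k \<le> i\<close> by (simp add: le_imp_power_dvd)
  moreover have "\<phi> ^ k dvd r0 * g + r1 * \<phi> ^ i - f"
    using diff \<open>k \<le> i\<close> \<open>i \<le> N\<close> by (meson dvd_trans le_imp_power_dvd order.trans)
  ultimately have "\<phi> ^ k dvd (r0 * g + r1 * \<phi> ^ i) - (r0 * g + r1 * \<phi> ^ i - f)"
    by (meson dvd_add dvd_diff)
  then show ?thesis by simp
qed

lemma not_quot_ideal_mem_pow_below:
  fixes \<phi> g :: "'a::field poly"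
  assumes "degree \<phi> > 0" and "i \<le> N" and "U < i"
    and "\<phi> ^ Suc U dvd \<phi> ^ (N - i) * g"
  shows "\<not> quot_ideal_mem (\<phi> ^ N) (\<phi> ^ i, g) (0, \<phi> ^ U)"
proof
  assume mem: "quot_ideal_mem (\<phi> ^ N) (\<phi> ^ i, g) (0, \<phi> ^ U)"
  have "\<phi> \<noteq> 0" using assms(1) by auto
  from quot_ideal_mem_pow_dvd[OF mem this assms(2) Suc_leI[OF assms(3)] assms(4)]
  have "\<phi> ^ Suc U dvd \<phi> ^ U" .
  with not_pow_Suc_dvd_pow[OF assms(1)] show False by blast
qed

theorem proposition3p13:
  fixes p m s :: nat
    and \<alpha> \<alpha>0 \<gamma> \<epsilon> :: "'a::{field,finite}"
    and i t :: nat
    and h :: "'a poly"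
    and a b :: "nat \<Rightarrow> 'a"
  assumes "prime p" and "odd p" and "m > 0" and "s > 0"
    and "card (UNIV :: 'a set) = p ^ m"
    and "p ^ m mod 4 = 3"
    and "\<alpha> \<noteq> 0" and "\<not> (\<exists>y. y ^ 2 = \<alpha>)"
    and "\<alpha>0 ^ (p ^ s) = \<alpha>"
    and "\<gamma> ^ 4 + 4 * \<alpha>0 = 0"
    and "\<epsilon> = 1 \<or> \<epsilon> = -1"
    and "1 \<le> i" and "i \<le> p ^ s - 1" and "t < i"
    and hform: "h = 0 \<or>
       (quot_unit ([:\<gamma>\<^sup>2 / 2, \<epsilon> * \<gamma>, 1:] ^ (p ^ s)) (h, 0) \<and>
        h = (\<Sum>j<p ^ s. [:b j, a j:] * [:\<gamma>\<^sup>2 / 2, \<epsilon> * \<gamma>, 1:] ^ j) \<and>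
        [:b 0, a 0:] \<noteq> 0)"
  shows "(let \<phi> = [:\<gamma>\<^sup>2 / 2, \<epsilon> * \<gamma>, 1:];
              P = (\<lambda>U. quot_ideal_mem (\<phi> ^ (p ^ s)) (\<phi> ^ i, \<phi> ^ t * h) (0, \<phi> ^ U));
              V = (if h = 0 then i else min i (p ^ s - i + t))
          in P V \<and> (\<forall>U < V. \<not> P U))"
proof -
  define \<phi> where "\<phi> = [:\<gamma>\<^sup>2 / 2, \<epsilon> * \<gamma>, 1:]"
  define N where "N = p ^ s"
  define P where "P U \<longleftrightarrow> quot_ideal_mem (\<phi> ^ N) (\<phi> ^ i, \<phi> ^ t * h) (0, \<phi> ^ U)" for U
  define V where "V = (if h = 0 then i else min i (N - i + t))"
  have deg: "degree \<phi> > 0" and "i \<le> N"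
    using assms(13) by (auto simp: \<phi>_def N_def)
  have "P V"
  proof (cases "h = 0 \<or> i \<le> N - i + t")
    case True
    then show ?thesis using quot_ideal_mem_fst_u by (auto simp: P_def V_def)
  next
    case False
    then have "quot_unit (\<phi> ^ N) (h, 0)" using hform by (auto simp: \<phi>_def N_def)
    with False show ?thesis
      using quot_ideal_mem_pow_unit[OF _ \<open>i \<le> N\<close>] by (auto simp: P_def V_def)
  qed
  moreover have "\<not> P U" if "U < V" for U
  proof -
    have "\<phi> ^ Suc U dvd \<phi> ^ (N - i + t) * h"
    proof (cases "h = 0")
      case False
      then have "Suc U \<le> N - i + t" using that by (simp add: V_def)
      then show ?thesis by (intro dvd_mult2 le_imp_power_dvd)
    qed simp
    then have "\<phi> ^ Suc U dvd \<phi> ^ (N - i) * (\<phi> ^ t * h)"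
      by (simp add: power_add mult.assoc)
    moreover have "U < i" using that by (auto simp: V_def split: if_splits)
    ultimately show ?thesis
      using not_quot_ideal_mem_pow_below[OF deg \<open>i \<le> N\<close>] by (simp add: P_def)
  qed
  ultimately show ?thesis
    unfolding Let_def \<phi>_def[symmetric] N_def[symmetric] V_def[symmetric] by (simp add: P_def)
qed

end
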